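(* In a soft sequence heap with rank threshold $r_0=\lceil\lg(1/\epsilon)\rceil$, for every item $e$ contained in a sequence of rank $r$, we have $|C(e)|\le c_r$ and $|W(e)|\le w_r$, where $c_r=w_r=0$ for $r\le r_0$ and $c_r=w_r=2^{\lfloor (r-r_0)/2\rfloor}-1$ for $r>r_0$.
   Context: Soft sequence heap with error parameter $0<\epsilon<1$ and $r_0=\lceil \lg(1/\epsilon)\rceil$ ($\lg$ = binary logarithm). The heap stores a list of nonempty sequences of items, each sorted increasingly by key and having a nonnegative integer rank. Each item $e$ currently in a sequence carries a (possibly empty) corruption-set $C(e)$ and witness-set $W(e)$; a newly inserted item has both empty. The operation $\mathrm{reduce}(L)$ on a sorted sequence $L=e_1,\dots,e_m$: for every $1\le i<m/2$, the item $e_{2i}$ is removed from $L$, the items $\{e_{2i}\}\cup C(e_{2i})$ are added to $C(e_{2i+1})$, and the items $\{e_{2i}\}\cup W(e_{2i})$ are added to $W(e_{2i-1})$. A rank-$0$ sequence is created by inserting a single item. Merging two sequences of equal rank $r$ produces their sorted union, of rank $r+1$, with corruption- and witness-sets unchanged; if $r+1>r_0$ and $r+1-r_0$ is even, $\mathrm{reduce}$ is then applied to the result. Apart from $\mathrm{reduce}$, corruption- and witness-sets are only shrunk (by extract-min removing items from them or discarding them). *)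

theory Defs
  imports Complex_Main "HOL-Library.Multiset" "HOL-Library.Sublist"
begin

text \<open>An entry of a sequence: an item e together with its corruption-set C(e)
  and witness-set W(e).  A sequence is a pair (rank, list of entries);
  the heap is a multiset of sequences.\<close>

type_synonym 'a entry = "'a \<times> 'a set \<times> 'a set"
type_synonym 'a sseq = "nat \<times> 'a entry list"

text \<open>reduce on L = e_1..e_m (here 0-indexed, position k = j-1): for 1 <= i < m/2
  the item e_(2i) (index 2i-1) is removed, e_(2i+1) (index 2i) gets
  {e_(2i)} \<union> C(e_(2i)) added to its C-set, and e_(2i-1) (index 2i-2) gets
  {e_(2i)} \<union> W(e_(2i)) added to its W-set.\<close>

definition removed_idx :: "nat \<Rightarrow> nat \<Rightarrow> bool" where
  "removed_idx m k \<longleftrightarrow> odd k \<and> k + 1 < m"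

definition reduce :: "'a entry list \<Rightarrow> 'a entry list" where
  "reduce L =
    map (\<lambda>k. let (e, c, w) = L ! k in
              (e,
               c \<union> (if 0 < k \<and> removed_idx (length L) (k - 1)
                    then insert (fst (L ! (k - 1))) (fst (snd (L ! (k - 1)))) else {}),
               w \<union> (if removed_idx (length L) (k + 1)
                    then insert (fst (L ! (k + 1))) (snd (snd (L ! (k + 1)))) else {})))
        (filter (\<lambda>k. \<not> removed_idx (length L) k) [0..<length L])"

text \<open>Shrinking a sequence (extract-min etc.): same rank, the items form a
  nonempty subsequence, and corruption/witness sets only shrink.\<close>

definition shrink_seq :: "'a sseq \<Rightarrow> 'a sseq \<Rightarrow> bool" where
  "shrink_seq s s' \<longleftrightarrow> fst s' = fst s \<and> snd s' \<noteq> [] \<and>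
     (\<exists>xs. subseq xs (snd s) \<and>
        list_all2 (\<lambda>(e, c, w) (e', c', w'). e' = e \<and> c' \<subseteq> c \<and> w' \<subseteq> w) xs (snd s'))"

inductive reach :: "('a \<Rightarrow> 'k::linorder) \<Rightarrow> nat \<Rightarrow> 'a sseq multiset \<Rightarrow> bool"
  for key :: "'a \<Rightarrow> 'k::linorder" and r0 :: nat where
  empty: "reach key r0 {#}"
| insert: "reach key r0 H \<Longrightarrow> reach key r0 (add_mset (0, [(e, {}, {})]) H)"
| merge: "reach key r0 (add_mset (r, L1) (add_mset (r, L2) H)) \<Longrightarrow>
          mset L = mset L1 + mset L2 \<Longrightarrow> sorted (map (key \<circ> fst) L) \<Longrightarrow>
          reach key r0 (add_mset (Suc r,
             if r0 < Suc r \<and> even (Suc r - r0) then reduce L else L) H)"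
| shrink: "reach key r0 H \<Longrightarrow> M \<subseteq># H \<Longrightarrow> rel_mset shrink_seq M H' \<Longrightarrow>
          reach key r0 H'"

definition cw_bound :: "nat \<Rightarrow> nat \<Rightarrow> nat" where
  "cw_bound r0 r = (if r \<le> r0 then 0 else 2 ^ ((r - r0) div 2) - 1)"

end

theory Submission
  imports Defs
begin

text \<open>The bound is an invariant of all reachable heaps, for an arbitrary threshold \<open>r0\<close>.  Insertion creates empty sets, a merge without
  \<open>reduce\<close> keeps the sets while the bound is monotone in the rank, and shrinking only
  shrinks.  In \<open>reduce\<close> each surviving item receives, in each of its two sets, at most one
  removed neighbour together with that neighbour's set, so sizes bounded by \<open>b\<close> become
  bounded by \<open>2 b + 1\<close>; as \<open>reduce\<close> happens exactly when \<open>r - r0\<close> becomes even, this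
  matches \<open>2 (2^(k-1) - 1) + 1 = 2^k - 1\<close>.\<close>

fun entry_bounded :: "nat \<Rightarrow> 'a entry \<Rightarrow> bool" where
  "entry_bounded b (e, C, W) \<longleftrightarrow> finite C \<and> finite W \<and> card C \<le> b \<and> card W \<le> b"

definition heap_bounded :: "nat \<Rightarrow> 'a sseq multiset \<Rightarrow> bool" where
  "heap_bounded r0 H \<longleftrightarrow> (\<forall>(r, L)\<in>#H. \<forall>x\<in>set L. entry_bounded (cw_bound r0 r) x)"

lemma heap_bounded_add_mset [simp]:
  "heap_bounded r0 (add_mset (r, L) H) \<longleftrightarrow>
     (\<forall>x\<in>set L. entry_bounded (cw_bound r0 r) x) \<and> heap_bounded r0 H"
  unfolding heap_bounded_def by simp

lemma heap_bounded_entry: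
  "heap_bounded r0 H \<Longrightarrow> (r, L) \<in># H \<Longrightarrow> x \<in> set L \<Longrightarrow> entry_bounded (cw_bound r0 r) x"
  unfolding heap_bounded_def by auto

lemma entry_bounded_mono: "entry_bounded b x \<Longrightarrow> b \<le> b' \<Longrightarrow> entry_bounded b' x"
  by (cases x) auto

lemma cw_bound_mono: "r \<le> r' \<Longrightarrow> cw_bound r0 r \<le> cw_bound r0 r'"
  unfolding cw_bound_def
  by (auto intro!: diff_le_mono power_increasing div_le_mono)

lemma cw_bound_Suc_even:
  assumes "r0 < Suc r" and "even (Suc r - r0)"
  shows "2 * cw_bound r0 r + 1 \<le> cw_bound r0 (Suc r)"
proof -
  obtain k where k: "Suc r - r0 = 2 * k"
    using assms(2) by (rule evenE)
  with assms(1) obtain j where "k = Suc j"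
    by (cases k) auto
  with k have "r - r0 = 2 * j + 1" "Suc r - r0 = 2 * Suc j"
    by auto
  then have "cw_bound r0 r = 2 ^ j - 1" "cw_bound r0 (Suc r) = 2 * 2 ^ j - 1"
    unfolding cw_bound_def by auto
  moreover have "1 \<le> (2::nat) ^ j" by simp
  ultimately show ?thesis by linarith
qed

lemma card_Un_insert_le:
  assumes "finite C" "card C \<le> b" "finite D" "card D \<le> b"
  shows "finite (C \<union> insert a D) \<and> card (C \<union> insert a D) \<le> 2 * b + 1"
proof -
  have "card (insert a D) \<le> card D + 1"
    by (simp add: card_insert_if \<open>finite D\<close>)
  then show ?thesis
    using card_Un_le[of C "insert a D"] assms by simp
qed

lemma in_set_reduceE:
  assumes "x \<in> set (reduce L)"
  obtains e C W C' W' where "(e, C, W) \<in> set L" "x = (e, C \<union> C', W \<union> W')"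
    and "C' = {} \<or> (\<exists>(e', C'', W'')\<in>set L. C' = insert e' C'')"
    and "W' = {} \<or> (\<exists>(e', C'', W'')\<in>set L. W' = insert e' W'')"
proof -
  let ?m = "length L"
  from assms obtain k where k: "k < ?m" and
    x: "x = (let (e, C, W) = L ! k in
              (e,
               C \<union> (if 0 < k \<and> removed_idx ?m (k - 1)
                    then insert (fst (L ! (k - 1))) (fst (snd (L ! (k - 1)))) else {}),
               W \<union> (if removed_idx ?m (k + 1)
                    then insert (fst (L ! (k + 1))) (snd (snd (L ! (k + 1)))) else {})))"
    unfolding reduce_def by auto
  obtain e C W where Lk: "L ! k = (e, C, W)" by (cases "L ! k")
  define C' where "C' = (if 0 < k \<and> removed_idx ?m (k - 1)
                    then insert (fst (L ! (k - 1))) (fst (snd (L ! (k - 1)))) else {})"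
  define W' where "W' = (if removed_idx ?m (k + 1)
                    then insert (fst (L ! (k + 1))) (snd (snd (L ! (k + 1)))) else {})"
  have C': "C' = {} \<or> (\<exists>(e', C'', W'')\<in>set L. C' = insert e' C'')"
  proof (cases "0 < k \<and> removed_idx ?m (k - 1)")
    case True
    with k have "L ! (k - 1) \<in> set L" by simp
    with True show ?thesis
      by (intro disjI2 bexI[of _ "L ! (k - 1)"]) (auto simp: C'_def split: prod.split)
  qed (auto simp: C'_def)
  have W': "W' = {} \<or> (\<exists>(e', C'', W'')\<in>set L. W' = insert e' W'')"
  proof (cases "removed_idx ?m (k + 1)")
    case True
    then have "L ! (k + 1) \<in> set L" unfolding removed_idx_def by simp
    with True show ?thesis
      by (intro disjI2 bexI[of _ "L ! (k + 1)"]) (auto simp: W'_def split: prod.split)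
  qed (auto simp: W'_def)
  have "(e, C, W) \<in> set L"
    using k Lk by (metis nth_mem)
  moreover have "x = (e, C \<union> C', W \<union> W')"
    by (simp add: x Lk C'_def W'_def)
  ultimately show thesis
    using C' W' by (rule that)
qed

lemma entry_bounded_reduce:
  assumes "\<forall>x\<in>set L. entry_bounded b x" and "x \<in> set (reduce L)"
  shows "entry_bounded (2 * b + 1) x"
  using assms(2)
proof (rule in_set_reduceE)
  fix e C W C' W'
  assume x: "x = (e, C \<union> C', W \<union> W')" and "(e, C, W) \<in> set L"
    and C': "C' = {} \<or> (\<exists>(e', C'', W'')\<in>set L. C' = insert e' C'')"
    and W': "W' = {} \<or> (\<exists>(e', C'', W'')\<in>set L. W' = insert e' W'')"
  from \<open>(e, C, W) \<in> set L\<close> assms(1)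
  have CW: "finite C" "card C \<le> b" "finite W" "card W \<le> b" by auto
  have "finite (C \<union> C') \<and> card (C \<union> C') \<le> 2 * b + 1"
    using C'
  proof
    assume "\<exists>(e', C'', W'')\<in>set L. C' = insert e' C''"
    with assms(1) obtain e' C'' where "C' = insert e' C''" "finite C''" "card C'' \<le> b"
      by fastforce
    with card_Un_insert_le[OF CW(1,2)] show ?thesis by simp
  qed (use CW in simp)
  moreover have "finite (W \<union> W') \<and> card (W \<union> W') \<le> 2 * b + 1"
    using W'
  proof
    assume "\<exists>(e', C'', W'')\<in>set L. W' = insert e' W''"
    with assms(1) obtain e' W'' where "W' = insert e' W''" "finite W''" "card W'' \<le> b"
      by fastforce
    with card_Un_insert_le[OF CW(3,4)] show ?thesis by simp
  qed (use CW in simp)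
  ultimately show ?thesis
    using x by simp
qed

lemma shrink_seq_entryE:
  assumes "shrink_seq s s'" and "(e, C', W') \<in> set (snd s')"
  obtains C W where "(e, C, W) \<in> set (snd s)" "C' \<subseteq> C" "W' \<subseteq> W"
proof -
  obtain xs where sub: "subseq xs (snd s)"
    and rel: "list_all2 (\<lambda>(e, C, W) (e', C', W'). e' = e \<and> C' \<subseteq> C \<and> W' \<subseteq> W) xs (snd s')"
    using assms(1) unfolding shrink_seq_def by auto
  obtain i where i: "i < length (snd s')" "snd s' ! i = (e, C', W')"
    using assms(2) by (auto simp: in_set_conv_nth)
  obtain C W where xi: "xs ! i = (e, C, W)" "C' \<subseteq> C" "W' \<subseteq> W"
    using rel i by (cases "xs ! i") (auto simp: list_all2_conv_all_nth)
  have "xs ! i \<in> set xs"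
    using rel i(1) by (simp add: list_all2_conv_all_nth)
  with sub have "xs ! i \<in> set (snd s)"
    by (auto elim: list_emb_set)
  with xi that show thesis by simp
qed

lemma entry_bounded_shrink_seq:
  assumes "shrink_seq s s'" and "\<forall>x\<in>set (snd s). entry_bounded b x" and "y \<in> set (snd s')"
  shows "entry_bounded b y"
proof -
  obtain e C' W' where y: "y = (e, C', W')" by (cases y)
  with assms obtain C W where "(e, C, W) \<in> set (snd s)" "C' \<subseteq> C" "W' \<subseteq> W"
    by (auto elim: shrink_seq_entryE)
  moreover from this have "entry_bounded b (e, C, W)"
    using assms(2) by blast
  ultimately show ?thesis
    using y card_mono[of C C'] card_mono[of W W'] by (auto intro: finite_subset)
qed

lemma reach_heap_bounded: "reach key r0 H \<Longrightarrow> heap_bounded r0 H"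
proof (induction rule: reach.induct)
  case empty
  then show ?case by (simp add: heap_bounded_def)
next
  case (insert H e)
  then show ?case by simp
next
  case (merge r L1 L2 H L)
  have "set L = set L1 \<union> set L2"
    using arg_cong[OF merge.hyps(2), of set_mset] by simp
  with merge.IH have L: "\<forall>x\<in>set L. entry_bounded (cw_bound r0 r) x" and H: "heap_bounded r0 H"
    by auto
  show ?case
  proof (cases "r0 < Suc r \<and> even (Suc r - r0)")
    case True
    then have "2 * cw_bound r0 r + 1 \<le> cw_bound r0 (Suc r)"
      by (intro cw_bound_Suc_even) auto
    then have "\<forall>x\<in>set (reduce L). entry_bounded (cw_bound r0 (Suc r)) x"
      using entry_bounded_reduce[OF L] entry_bounded_mono by blast
    with H show ?thesis unfolding if_P[OF True] by simp
  next
    case False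
    have "\<forall>x\<in>set L. entry_bounded (cw_bound r0 (Suc r)) x"
      using L cw_bound_mono[of r "Suc r" r0] entry_bounded_mono by auto
    with H show ?thesis unfolding if_not_P[OF False] by simp
  qed
next
  case (shrink H M H')
  show ?case unfolding heap_bounded_def
  proof (clarify)
    fix r' L' y
    assume "(r', L') \<in># H'" "y \<in> set L'"
    then obtain H'' where "H' = add_mset (r', L') H''" by (blast elim: mset_add)
    with msed_rel_invR[of shrink_seq M] shrink.hyps(3)
    obtain s M' where "M = add_mset s M'" "shrink_seq s (r', L')" by blast
    then have "s \<in># M" by simp
    obtain r L where s: "s = (r, L)" by (cases s)
    with \<open>shrink_seq s (r', L')\<close> have "r' = r" by (simp add: shrink_seq_def)
    from shrink.hyps(2) \<open>s \<in># M\<close> have "s \<in># H" by (rule mset_subset_eqD)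
    with shrink.IH s have "\<forall>x\<in>set (snd s). entry_bounded (cw_bound r0 r) x"
      by (auto simp: heap_bounded_def)
    from entry_bounded_shrink_seq[OF \<open>shrink_seq s (r', L')\<close> this] \<open>y \<in> set L'\<close> \<open>r' = r\<close>
    show "entry_bounded (cw_bound r0 r') y"
      by simp
  qed
qed

corollary reach_card_le_cw_bound:
  assumes "reach key r0 H" and "(r, L) \<in># H" and "(e, C, W) \<in> set L"
  shows "card C \<le> cw_bound r0 r \<and> card W \<le> cw_bound r0 r"
  using heap_bounded_entry[OF reach_heap_bounded[OF assms(1)] assms(2,3)] by simp

theorem lemma6:
  fixes \<epsilon> :: real and key :: "'a \<Rightarrow> 'k::linorder"
    and H :: "'a sseq multiset"
  assumes "0 < \<epsilon>" "\<epsilon> < 1"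
    and "reach key (nat \<lceil>log 2 (1 / \<epsilon>)\<rceil>) H"
    and "(r, L) \<in># H" and "(e, C, W) \<in> set L"
  shows "card C \<le> cw_bound (nat \<lceil>log 2 (1 / \<epsilon>)\<rceil>) r
       \<and> card W \<le> cw_bound (nat \<lceil>log 2 (1 / \<epsilon>)\<rceil>) r"
  using assms(3-5) by (rule reach_card_le_cw_bound)

end
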